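(* Let $\mathcal{X}\subseteq\mathcal{B}(0,R)$ be compact convex, $\mathcal{Z}$ a set and $f:\mathcal{X}\times\mathcal{Z}\to\mathbb{R}$ with $f(\cdot,z)\in\mathcal{F}^0_{\mathcal{X}}(L)$ for all $z$. Let $\boldsymbol{\pi}$ be a uniformly random permutation of $[n]$, let $(\eta_t)_{t\in[T]}$ be a non-increasing sequence of positive step sizes, and suppose $T\le n$. For fixed-permutation SGD $\mathcal{A}_{\sf PerSGD}$ and any neighboring datasets $S\simeq S'$, $$\mathbb{E}\big[\|\mathcal{A}_{\sf PerSGD}(S)-\mathcal{A}_{\sf PerSGD}(S')\|\big]\le\min\Big\{2R,\;\sqrt2L\frac{T-1}{n}\sqrt{\sum_{t=1}^{T-1}\eta_t^2}\Big\}.$$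
   Context: $\mathcal{F}^0_{\mathcal{X}}(L)$ is the class of convex $L$-Lipschitz functions on $\mathcal{X}$ (Lipschitz on an open set containing $\mathcal{X}$, so subgradients have norm at most $L$). $\mathcal{A}_{\sf PerSGD}$ on $S=(z_1,\dots,z_n)$: from a fixed initial point $x^1\in\mathcal{X}$, $x^{t+1}=\mathsf{Proj}_{\mathcal{X}}(x^t-\eta_t\nabla f(x^t,z_{\boldsymbol{\pi}(t)}))$ for $t=1,\dots,T-1$, where $\nabla f(x,z)$ is a fixed selection of a subgradient; output the weighted average $\frac{1}{\sum_t\eta_t}\sum_{t\in[T]}\eta_tx^t$. The runs on $S$ and $S'$ use the same initial point and the same $\boldsymbol{\pi}$; the expectation is over $\boldsymbol{\pi}$. $S\simeq S'$ means the datasets differ in at most one entry. *)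

theory Defs
  imports "HOL-Analysis.Analysis" "HOL-Combinatorics.Permutations"
begin

definition convex_lipschitz_class :: "'a::euclidean_space set \<Rightarrow> real \<Rightarrow> ('a \<Rightarrow> real) set" where
  "convex_lipschitz_class X L =
     {h. convex_on X h \<and> (\<exists>U. open U \<and> X \<subseteq> U \<and> L-lipschitz_on U h)}"

definition is_subgradient :: "'a::euclidean_space set \<Rightarrow> ('a \<Rightarrow> real) \<Rightarrow> 'a \<Rightarrow> 'a \<Rightarrow> bool" where
  "is_subgradient X h x v \<longleftrightarrow> (\<forall>y\<in>X. h y \<ge> h x + inner v (y - x))"

text \<open>Iterates of permuted SGD: persgd_iter ... k is the iterate x^(k+1);
  x^(t+1) = Proj_X (x^t - eta t * grad(x^t, S (perm t))).\<close>
fun persgd_iter :: "'a::euclidean_space set \<Rightarrow> ('a \<Rightarrow> 'z \<Rightarrow> 'a) \<Rightarrow> (nat \<Rightarrow> real)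
    \<Rightarrow> (nat \<Rightarrow> 'z) \<Rightarrow> (nat \<Rightarrow> nat) \<Rightarrow> 'a \<Rightarrow> nat \<Rightarrow> 'a" where
  "persgd_iter X g eta S perm x1 0 = x1"
| "persgd_iter X g eta S perm x1 (Suc k) =
     closest_point X (persgd_iter X g eta S perm x1 k
        - eta (Suc k) *\<^sub>R g (persgd_iter X g eta S perm x1 k) (S (perm (Suc k))))"

definition persgd :: "'a::euclidean_space set \<Rightarrow> ('a \<Rightarrow> 'z \<Rightarrow> 'a) \<Rightarrow> (nat \<Rightarrow> real)
    \<Rightarrow> nat \<Rightarrow> 'a \<Rightarrow> (nat \<Rightarrow> nat) \<Rightarrow> (nat \<Rightarrow> 'z) \<Rightarrow> 'a" where
  "persgd X g eta T x1 perm S =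
     (1 / (\<Sum>t=1..T. eta t)) *\<^sub>R (\<Sum>t=1..T. eta t *\<^sub>R persgd_iter X g eta S perm x1 (t - 1))"

definition neighbouring :: "nat \<Rightarrow> (nat \<Rightarrow> 'z) \<Rightarrow> (nat \<Rightarrow> 'z) \<Rightarrow> bool" where
  "neighbouring n S S' \<longleftrightarrow> (\<exists>i. \<forall>j\<in>{1..n}. j \<noteq> i \<longrightarrow> S j = S' j)"

end

theory Submission
  imports Defs
begin

text \<open>For a fixed permutation the runs on S and S' see identical samples until the step t
  at which the differing entry is used. Since projection onto X is nonexpansive, that step
  separates the iterates by at most 2 L \<eta>_t; afterwards monotonicity of subgradients lets
  the squared distance grow by at most 4 L^2 \<eta>_r^2 per step. Hence all iterates stay within
  2 L (\<Sum>_{r<T} \<eta>_r^2)^(1/2) of each other, and only the last T - t of them differ, which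
  for non-increasing step sizes carry at most the fraction (T - t)/T of the weight. Under a
  uniformly random permutation t is uniform on [n], and the mean of (T - t)_+/T is
  (T - 1)/(2n). The bound 2R holds because both outputs are convex combinations of points
  of X.\<close>

lemma is_subgradient_monotone:
  assumes "x \<in> X" "y \<in> X" "is_subgradient X h x u" "is_subgradient X h y v"
  shows "0 \<le> inner (u - v) (x - y)"
proof -
  have "h x + inner u (y - x) \<le> h y" "h y + inner v (x - y) \<le> h x"
    using assms unfolding is_subgradient_def by auto
  then show ?thesis
    by (simp add: inner_diff_left inner_diff_right inner_commute)
qed

lemma closest_point_step_dist_sq_le:
  fixes X :: "'a::euclidean_space set"
  assumes "convex X" "closed X" "X \<noteq> {}" "0 \<le> e" "0 \<le> inner (u - v) (x - y)"
  shows "(norm (closest_point X (x - e *\<^sub>R u) - closest_point X (y - e *\<^sub>R v)))\<^sup>2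
           \<le> (norm (x - y))\<^sup>2 + e\<^sup>2 * (norm (u - v))\<^sup>2"
proof -
  have "norm (closest_point X (x - e *\<^sub>R u) - closest_point X (y - e *\<^sub>R v))
          \<le> norm ((x - y) - e *\<^sub>R (u - v))"
    using closest_point_lipschitz[OF assms(1-3), of "x - e *\<^sub>R u" "y - e *\<^sub>R v"]
    by (simp add: dist_norm algebra_simps)
  then have "(norm (closest_point X (x - e *\<^sub>R u) - closest_point X (y - e *\<^sub>R v)))\<^sup>2
               \<le> (norm ((x - y) - e *\<^sub>R (u - v)))\<^sup>2"
    by (simp add: power_mono)
  also have "\<dots> = (norm (x - y))\<^sup>2 - 2 * e * inner (u - v) (x - y) + e\<^sup>2 * (norm (u - v))\<^sup>2"
    unfolding power2_norm_eq_inner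
    by (simp add: inner_diff_left inner_diff_right inner_commute algebra_simps power2_eq_square)
  also have "\<dots> \<le> (norm (x - y))\<^sup>2 + e\<^sup>2 * (norm (u - v))\<^sup>2"
    using assms(4,5) by simp
  finally show ?thesis .
qed

lemma persgd_iter_in:
  assumes "closed X" "x1 \<in> X"
  shows "persgd_iter X g eta S perm x1 k \<in> X"
  using assms by (cases k) (auto intro: closest_point_in_set)

lemma persgd_in:
  assumes "convex X" "closed X" "x1 \<in> X" "\<And>t. t \<in> {1..T} \<Longrightarrow> 0 < eta t" "1 \<le> T"
  shows "persgd X g eta T x1 perm S \<in> X"
proof -
  have "0 < (\<Sum>t=1..T. eta t)"
    using assms(4,5) by (intro sum_pos) auto
  then show ?thesis
    unfolding persgd_def scaleR_sum_right scaleR_scaleR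
    using assms by (intro convex_sum)
      (auto simp: sum_divide_distrib[symmetric] persgd_iter_in less_imp_le)
qed

lemma norm_persgd_diff_le_diameter:
  assumes "convex X" "closed X" "X \<subseteq> cball 0 R" "x1 \<in> X"
    and "\<And>t. t \<in> {1..T} \<Longrightarrow> 0 < eta t" "1 \<le> T"
  shows "norm (persgd X g eta T x1 perm S - persgd X g eta T x1 perm' S') \<le> 2 * R"
proof -
  have "persgd X g eta T x1 perm S \<in> cball 0 R" "persgd X g eta T x1 perm' S' \<in> cball 0 R"
    using persgd_in[where eta = eta, OF assms(1,2,4,5,6)] assms(3) by blast+
  then show ?thesis
    using norm_triangle_ineq4[of "persgd X g eta T x1 perm S" "persgd X g eta T x1 perm' S'"]
    by simp
qed

lemma norm_persgd_diff_le:
  assumes "\<And>t. t \<in> {1..T} \<Longrightarrow> 0 \<le> eta t"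
  shows "norm (persgd X g eta T x1 perm S - persgd X g eta T x1 perm S')
           \<le> (\<Sum>t=1..T. eta t * norm (persgd_iter X g eta S perm x1 (t - 1)
                                        - persgd_iter X g eta S' perm x1 (t - 1)))
             / (\<Sum>t=1..T. eta t)"
proof -
  let ?x = "persgd_iter X g eta S perm x1" and ?y = "persgd_iter X g eta S' perm x1"
  have weights_nonneg: "0 \<le> (\<Sum>t=1..T. eta t)"
    by (rule sum_nonneg) (rule assms)
  have "persgd X g eta T x1 perm S - persgd X g eta T x1 perm S'
          = (1 / (\<Sum>t=1..T. eta t)) *\<^sub>R (\<Sum>t=1..T. eta t *\<^sub>R (?x (t - 1) - ?y (t - 1)))"
    unfolding persgd_def by (simp add: scaleR_diff_right sum_subtractf)
  then have "norm (persgd X g eta T x1 perm S - persgd X g eta T x1 perm S')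
          = norm (\<Sum>t=1..T. eta t *\<^sub>R (?x (t - 1) - ?y (t - 1))) / (\<Sum>t=1..T. eta t)"
    using weights_nonneg by simp
  also have "\<dots> \<le> (\<Sum>t=1..T. eta t * norm (?x (t - 1) - ?y (t - 1))) / (\<Sum>t=1..T. eta t)"
    using assms weights_nonneg by (intro divide_right_mono order_trans[OF norm_sum] sum_mono) auto
  finally show ?thesis .
qed

lemma sum_tail_le_of_antimono:
  fixes eta :: "nat \<Rightarrow> real"
  assumes antimono: "\<And>s t. 1 \<le> s \<Longrightarrow> s \<le> t \<Longrightarrow> t \<le> T \<Longrightarrow> eta t \<le> eta s"
  shows "real T * (\<Sum>s=Suc t..T. eta s) \<le> real (T - t) * (\<Sum>s=1..T. eta s)"
proof (cases "t < T")
  case False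
  then show ?thesis by simp
next
  case True
  define head where "head = (\<Sum>s=1..t. eta s)"
  define tail where "tail = (\<Sum>s=Suc t..T. eta s)"
  have "{1..T} = {1..t} \<union> {Suc t..T}"
    using True by auto
  then have total: "(\<Sum>s=1..T. eta s) = head + tail"
    unfolding head_def tail_def by (simp add: sum.union_disjoint)
  have head_ge: "real t * eta (Suc t) \<le> head"
    using sum_bounded_below[of "{1..t}" "eta (Suc t)" eta] antimono[of _ "Suc t"] True
    unfolding head_def by fastforce
  have tail_le: "tail \<le> real (T - t) * eta (Suc t)"
    using sum_bounded_above[of "{Suc t..T}" eta "eta (Suc t)"] antimono[of "Suc t"] True
    unfolding tail_def by fastforce
  have "real t * tail \<le> real (T - t) * head"
    using mult_left_mono[OF tail_le, of "real t"] mult_left_mono[OF head_ge, of "real (T - t)"]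
    by (simp add: mult_ac)
  then show ?thesis
    using True total
    by (simp add: tail_def[symmetric] of_nat_diff algebra_simps)
qed

lemma norm_persgd_diff_le_of_agree_before:
  assumes eta_pos: "\<And>s. s \<in> {1..T} \<Longrightarrow> 0 < eta s"
    and eta_antimono: "\<And>s t. 1 \<le> s \<Longrightarrow> s \<le> t \<Longrightarrow> t \<le> T \<Longrightarrow> eta t \<le> eta s"
    and "1 \<le> T" "0 \<le> C"
    and iter_diff_le: "\<And>k. k < T \<Longrightarrow> norm (persgd_iter X g eta S perm x1 k
                                           - persgd_iter X g eta S' perm x1 k)
                                      \<le> (if t \<le> k then C else 0)"
  shows "norm (persgd X g eta T x1 perm S - persgd X g eta T x1 perm S') \<le> C * real (T - t) / real T"
proof -
  let ?x = "persgd_iter X g eta S perm x1" and ?y = "persgd_iter X g eta S' perm x1"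
  have weights_pos: "0 < (\<Sum>s=1..T. eta s)"
    using eta_pos \<open>1 \<le> T\<close> by (intro sum_pos) auto
  have "norm (persgd X g eta T x1 perm S - persgd X g eta T x1 perm S')
          \<le> (\<Sum>s=1..T. eta s * norm (?x (s - 1) - ?y (s - 1))) / (\<Sum>s=1..T. eta s)"
    using eta_pos by (intro norm_persgd_diff_le less_imp_le)
  also have "\<dots> \<le> (\<Sum>s=1..T. if t < s then C * eta s else 0) / (\<Sum>s=1..T. eta s)"
  proof (intro divide_right_mono sum_mono)
    fix s assume "s \<in> {1..T}"
    then show "eta s * norm (?x (s - 1) - ?y (s - 1)) \<le> (if t < s then C * eta s else 0)"
      using iter_diff_le[of "s - 1"] eta_pos[of s] mult_left_mono[of _ _ "eta s"]
      by (fastforce simp: mult.commute split: if_splits)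
  qed (use weights_pos in simp)
  also have "(\<Sum>s=1..T. if t < s then C * eta s else 0) = C * (\<Sum>s=Suc t..T. eta s)"
  proof -
    have "{s \<in> {1..T}. t < s} = {Suc t..T}"
      by auto
    then show ?thesis
      using sum.inter_filter[of "{1..T}" "\<lambda>s. C * eta s" "\<lambda>s. t < s"]
      by (simp add: sum_distrib_left)
  qed
  also have "C * (\<Sum>s=Suc t..T. eta s) / (\<Sum>s=1..T. eta s) \<le> C * (real (T - t) / real T)"
    unfolding times_divide_eq_right[symmetric]
  proof (rule mult_left_mono[OF _ \<open>0 \<le> C\<close>])
    show "(\<Sum>s=Suc t..T. eta s) / (\<Sum>s=1..T. eta s) \<le> real (T - t) / real T"
      using sum_tail_le_of_antimono[where eta = eta and t = t, OF eta_antimono]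
        weights_pos \<open>1 \<le> T\<close>
      by (simp add: divide_le_eq le_divide_eq mult.commute)
  qed
  finally show ?thesis
    by simp
qed

lemma sum_divide_card_le:
  fixes f :: "'a \<Rightarrow> real"
  assumes "finite A" "A \<noteq> {}" "\<And>x. x \<in> A \<Longrightarrow> f x \<le> K"
  shows "sum f A / card A \<le> K"
proof -
  have "0 < card A"
    using assms(1,2) by (simp add: card_gt_0_iff)
  then show ?thesis
    using sum_bounded_above[of A f K] assms(3) by (simp add: pos_divide_le_eq mult.commute)
qed

lemma sum_permutations_apply:
  fixes h :: "'a \<Rightarrow> 'b::comm_semiring_1"
  assumes "finite A" "i \<in> A"
  shows "of_nat (card A) * (\<Sum>p\<in>{p. p permutes A}. h (p i))
           = of_nat (card {p. p permutes A}) * sum h A"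
proof -
  let ?P = "{p. p permutes A}"
  have "(\<Sum>p\<in>?P. h (p j)) = (\<Sum>p\<in>?P. h (p i))" if "j \<in> A" for j
    using sum_permutations_compose_right[OF permutes_swap_id[OF that \<open>i \<in> A\<close>], of "\<lambda>p. h (p j)"]
    by simp
  then have "of_nat (card A) * (\<Sum>p\<in>?P. h (p i)) = (\<Sum>j\<in>A. \<Sum>p\<in>?P. h (p j))"
    by simp
  also have "\<dots> = (\<Sum>p\<in>?P. \<Sum>j\<in>A. h (p j))"
    by (rule sum.swap)
  also have "\<dots> = (\<Sum>p\<in>?P. sum h A)"
  proof (rule sum.cong[OF refl])
    fix p assume "p \<in> ?P"
    then show "(\<Sum>j\<in>A. h (p j)) = sum h A"
      using sum.permute[of p A h] by (simp add: comp_def)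
  qed
  finally show ?thesis
    by simp
qed

lemma sum_of_nat_diff_atLeastAtMost:
  assumes "T \<le> n"
  shows "(\<Sum>u=1..n. real (T - u)) = real T * (real T - 1) / 2"
proof -
  have "(\<Sum>u=1..T. real (T - u)) = real T * (real T - 1) / 2" for T
  proof (induction T)
    case (Suc T)
    have "(\<Sum>u=1..Suc T. real (Suc T - u)) = (\<Sum>u=1..T. real (T - u) + 1)"
      by (simp add: Suc_diff_le of_nat_Suc algebra_simps)
    also have "\<dots> = real T * (real T - 1) / 2 + real T"
      using Suc.IH by (simp add: sum.distrib)
    finally show ?case
      by (simp add: field_simps)
  qed simp
  moreover have "(\<Sum>u=1..n. real (T - u)) = (\<Sum>u=1..T. real (T - u))"
    using assms by (intro sum.mono_neutral_right) auto
  ultimately show ?thesis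
    by simp
qed

lemma neighbouring_obtain_index:
  assumes "neighbouring n S S'" "1 \<le> n"
  obtains i where "i \<in> {1..n}" "\<And>j. j \<in> {1..n} \<Longrightarrow> j \<noteq> i \<Longrightarrow> S j = S' j"
proof -
  obtain i where i: "\<And>j. j \<in> {1..n} \<Longrightarrow> j \<noteq> i \<Longrightarrow> S j = S' j"
    using assms(1) unfolding neighbouring_def by blast
  show ?thesis
  proof (cases "i \<in> {1..n}")
    case True
    with i that show ?thesis by blast
  next
    case False
    with i assms(2) that[of 1] show ?thesis by auto
  qed
qed

context
  fixes X :: "'a::euclidean_space set" and g :: "'a \<Rightarrow> 'z \<Rightarrow> 'a" and L :: real and x1 :: 'a
  assumes convex_X: "convex X" and closed_X: "closed X" and x1_in_X: "x1 \<in> X"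
    and g_monotone: "\<And>x y z. x \<in> X \<Longrightarrow> y \<in> X \<Longrightarrow> 0 \<le> inner (g x z - g y z) (x - y)"
    and norm_g_le: "\<And>x z. x \<in> X \<Longrightarrow> norm (g x z) \<le> L"
begin

text \<open>For k < t the sum is empty, so the bound also says that the runs coincide before step t.\<close>

lemma persgd_iter_dist_sq_le:
  assumes "\<And>r. r \<in> {1..k} \<Longrightarrow> 0 \<le> eta r"
    and "\<And>r. r \<in> {1..k} \<Longrightarrow> r \<noteq> t \<Longrightarrow> S (perm r) = S' (perm r)"
  shows "(norm (persgd_iter X g eta S perm x1 k - persgd_iter X g eta S' perm x1 k))\<^sup>2
           \<le> 4 * L\<^sup>2 * (\<Sum>r=t..k. (eta r)\<^sup>2)"
  using assms
proof (induction k)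
  case 0
  then show ?case
    by (simp add: sum_nonneg)
next
  case (Suc k)
  let ?x = "persgd_iter X g eta S perm x1 k" and ?y = "persgd_iter X g eta S' perm x1 k"
  let ?u = "g ?x (S (perm (Suc k)))" and ?v = "g ?y (S' (perm (Suc k)))"
  have IH: "(norm (?x - ?y))\<^sup>2 \<le> 4 * L\<^sup>2 * (\<Sum>r=t..k. (eta r)\<^sup>2)"
    using Suc by simp
  show ?case
  proof (cases "Suc k < t")
    case True
    then have "?x = ?y"
      using IH by simp
    moreover have "S (perm (Suc k)) = S' (perm (Suc k))"
      using Suc.prems(2) True by simp
    ultimately show ?thesis
      using True by simp
  next
    case False
    have in_X: "?x \<in> X" "?y \<in> X"
      by (rule persgd_iter_in[OF closed_X x1_in_X])+
    have nonneg_eta: "0 \<le> eta (Suc k)"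
      using Suc.prems(1) by simp
    have "0 \<le> inner (?u - ?v) (?x - ?y)"
    proof (cases "Suc k = t")
      case True
      then have "?x = ?y"
        using IH by simp
      then show ?thesis
        by simp
    next
      case False
      then show ?thesis
        using Suc.prems(2) g_monotone[OF in_X] by simp
    qed
    then have "(norm (persgd_iter X g eta S perm x1 (Suc k)
                        - persgd_iter X g eta S' perm x1 (Suc k)))\<^sup>2
                 \<le> (norm (?x - ?y))\<^sup>2 + (eta (Suc k))\<^sup>2 * (norm (?u - ?v))\<^sup>2"
      unfolding persgd_iter.simps(2) using x1_in_X
      by (intro closest_point_step_dist_sq_le[OF convex_X closed_X _ nonneg_eta]) auto
    also have "\<dots> \<le> (norm (?x - ?y))\<^sup>2 + (eta (Suc k))\<^sup>2 * (2 * L)\<^sup>2"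
    proof -
      have "norm (?u - ?v) \<le> 2 * L"
        using norm_triangle_ineq4[of ?u ?v] norm_g_le[OF in_X(1), of "S (perm (Suc k))"]
          norm_g_le[OF in_X(2), of "S' (perm (Suc k))"]
        by linarith
      then show ?thesis
        by (intro add_left_mono mult_left_mono power_mono) simp_all
    qed
    also have "\<dots> \<le> 4 * L\<^sup>2 * (\<Sum>r=t..Suc k. (eta r)\<^sup>2)"
      using IH False by (simp add: algebra_simps power_mult_distrib)
    finally show ?thesis .
  qed
qed

lemma norm_persgd_iter_diff_le:
  assumes eta_nonneg: "\<And>r. r \<in> {1..N} \<Longrightarrow> 0 \<le> eta r"
    and same: "\<And>r. r \<in> {1..N} \<Longrightarrow> r \<noteq> t \<Longrightarrow> S (perm r) = S' (perm r)"
    and "1 \<le> t" "k \<le> N"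
  shows "norm (persgd_iter X g eta S perm x1 k - persgd_iter X g eta S' perm x1 k)
           \<le> (if t \<le> k then 2 * L * sqrt (\<Sum>r=1..N. (eta r)\<^sup>2) else 0)"
proof -
  let ?d = "norm (persgd_iter X g eta S perm x1 k - persgd_iter X g eta S' perm x1 k)"
  have dist_sq: "?d\<^sup>2 \<le> 4 * L\<^sup>2 * (\<Sum>r=t..k. (eta r)\<^sup>2)"
    by (intro persgd_iter_dist_sq_le eta_nonneg same) (use \<open>k \<le> N\<close> in auto)
  show ?thesis
  proof (cases "t \<le> k")
    case True
    have "0 \<le> L"
      using order_trans[OF norm_ge_zero norm_g_le[OF x1_in_X]] .
    have "(\<Sum>r=t..k. (eta r)\<^sup>2) \<le> (\<Sum>r=1..N. (eta r)\<^sup>2)"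
      using \<open>1 \<le> t\<close> \<open>k \<le> N\<close> by (intro sum_mono2) auto
    then have "4 * L\<^sup>2 * (\<Sum>r=t..k. (eta r)\<^sup>2) \<le> 4 * L\<^sup>2 * (\<Sum>r=1..N. (eta r)\<^sup>2)"
      by (rule mult_left_mono) simp
    with dist_sq have "?d\<^sup>2 \<le> (2 * L * sqrt (\<Sum>r=1..N. (eta r)\<^sup>2))\<^sup>2"
      by (simp add: power_mult_distrib sum_nonneg)
    then have "?d \<le> 2 * L * sqrt (\<Sum>r=1..N. (eta r)\<^sup>2)"
      by (rule power2_le_imp_le) (simp add: \<open>0 \<le> L\<close> sum_nonneg)
    with True show ?thesis
      by simp
  next
    case False
    with dist_sq show ?thesis
      by simp
  qed
qed

lemma norm_persgd_diff_le_of_single_difference: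
  assumes eta_pos: "\<And>s. s \<in> {1..T} \<Longrightarrow> 0 < eta s"
    and eta_antimono: "\<And>s t. 1 \<le> s \<Longrightarrow> s \<le> t \<Longrightarrow> t \<le> T \<Longrightarrow> eta t \<le> eta s"
    and "1 \<le> T" "1 \<le> t"
    and same: "\<And>r. r \<in> {1..T - 1} \<Longrightarrow> r \<noteq> t \<Longrightarrow> S (perm r) = S' (perm r)"
  shows "norm (persgd X g eta T x1 perm S - persgd X g eta T x1 perm S')
           \<le> 2 * L * sqrt (\<Sum>r=1..T-1. (eta r)\<^sup>2) * real (T - t) / real T"
proof (rule norm_persgd_diff_le_of_agree_before[OF eta_pos eta_antimono \<open>1 \<le> T\<close>])
  have "0 \<le> L"
    using order_trans[OF norm_ge_zero norm_g_le[OF x1_in_X]] .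
  then show "0 \<le> 2 * L * sqrt (\<Sum>r=1..T-1. (eta r)\<^sup>2)"
    by (simp add: sum_nonneg)
  fix k assume "k < T"
  then show "norm (persgd_iter X g eta S perm x1 k - persgd_iter X g eta S' perm x1 k)
               \<le> (if t \<le> k then 2 * L * sqrt (\<Sum>r=1..T-1. (eta r)\<^sup>2) else 0)"
    using eta_pos same \<open>1 \<le> t\<close> by (intro norm_persgd_iter_diff_le) (auto simp: less_imp_le)
qed

lemma persgd_mean_norm_diff_le:
  assumes eta_pos: "\<And>s. s \<in> {1..T} \<Longrightarrow> 0 < eta s"
    and eta_antimono: "\<And>s t. 1 \<le> s \<Longrightarrow> s \<le> t \<Longrightarrow> t \<le> T \<Longrightarrow> eta t \<le> eta s"
    and "1 \<le> T" "T \<le> n" "neighbouring n S S'"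
  shows "(\<Sum>\<pi>\<in>{p. p permutes {1..n}}.
            norm (persgd X g eta T x1 \<pi> S - persgd X g eta T x1 \<pi> S'))
          / real (card {p. p permutes {1..n}})
         \<le> L * (real (T - 1) / real n) * sqrt (\<Sum>t=1..T-1. (eta t)\<^sup>2)"
proof -
  let ?P = "{p. p permutes {1..n}}"
  let ?D = "\<lambda>\<pi>. norm (persgd X g eta T x1 \<pi> S - persgd X g eta T x1 \<pi> S')"
  define C where "C = 2 * L * sqrt (\<Sum>r=1..T-1. (eta r)\<^sup>2)"
  define h where "h u = C * real (T - u) / real T" for u
  obtain i where "i \<in> {1..n}" and same: "\<And>j. j \<in> {1..n} \<Longrightarrow> j \<noteq> i \<Longrightarrow> S j = S' j"
    using neighbouring_obtain_index[OF \<open>neighbouring n S S'\<close>] \<open>1 \<le> T\<close> \<open>T \<le> n\<close> by auto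
  have "?D \<pi> \<le> h (inv \<pi> i)" if \<pi>: "\<pi> permutes {1..n}" for \<pi>
    unfolding h_def C_def
  proof (rule norm_persgd_diff_le_of_single_difference[OF eta_pos eta_antimono \<open>1 \<le> T\<close>])
    show "1 \<le> inv \<pi> i"
      using permutes_in_image[OF permutes_inv[OF \<pi>], of i] \<open>i \<in> {1..n}\<close> by simp
    fix r
    assume r: "r \<in> {1..T - 1}" "r \<noteq> inv \<pi> i"
    show "S (\<pi> r) = S' (\<pi> r)"
    proof (rule same)
      show "\<pi> r \<in> {1..n}"
        using permutes_in_image[OF \<pi>, of r] r(1) \<open>T \<le> n\<close> by auto
      show "\<pi> r \<noteq> i"
        using r(2) permutes_inverses(2)[OF \<pi>, of r] by auto
    qed
  qed
  then have "(\<Sum>\<pi>\<in>?P. ?D \<pi>) \<le> (\<Sum>\<pi>\<in>?P. h (inv \<pi> i))"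
    by (intro sum_mono) simp
  also have "\<dots> = (\<Sum>\<pi>\<in>?P. h (\<pi> i))"
    using sum_permutations_inverse[of "\<lambda>\<pi>. h (\<pi> i)"] by simp
  also have "\<dots> = real (card ?P) * (\<Sum>u=1..n. h u) / real n"
    using sum_permutations_apply[of "{1..n}" i h] \<open>i \<in> {1..n}\<close> \<open>1 \<le> T\<close> \<open>T \<le> n\<close>
    by (simp add: field_simps)
  also have "(\<Sum>u=1..n. h u) = C * (\<Sum>u=1..n. real (T - u)) / real T"
    unfolding h_def by (simp add: sum_distrib_left sum_divide_distrib)
  also have "\<dots> = C * (real T - 1) / 2"
    unfolding sum_of_nat_diff_atLeastAtMost[OF \<open>T \<le> n\<close>] using \<open>1 \<le> T\<close> by simp
  also have "real (card ?P) * (C * (real T - 1) / 2) / real n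
      = real (card ?P) * (L * (real (T - 1) / real n) * sqrt (\<Sum>t=1..T-1. (eta t)\<^sup>2))"
    unfolding C_def using \<open>1 \<le> T\<close> by (simp add: of_nat_diff)
  finally show ?thesis
    using card_permutations[of "{1..n}" n] by (simp add: pos_divide_le_eq mult.commute)
qed

end

theorem theoremA2:
  fixes X :: "'a::euclidean_space set" and R L :: real
    and f :: "'a \<Rightarrow> 'z \<Rightarrow> real" and g :: "'a \<Rightarrow> 'z \<Rightarrow> 'a"
    and eta :: "nat \<Rightarrow> real" and n T :: nat and x1 :: 'a
    and S S' :: "nat \<Rightarrow> 'z"
  assumes "compact X" and "convex X" and "X \<subseteq> cball 0 R"
    and "\<And>z. (\<lambda>x. f x z) \<in> convex_lipschitz_class X L"
    and "\<And>x z. x \<in> X \<Longrightarrow> is_subgradient X (\<lambda>y. f y z) x (g x z)"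
    and "\<And>x z. x \<in> X \<Longrightarrow> norm (g x z) \<le> L"
    and "\<And>t. t \<in> {1..T} \<Longrightarrow> eta t > 0"
    and "\<And>s t. 1 \<le> s \<Longrightarrow> s \<le> t \<Longrightarrow> t \<le> T \<Longrightarrow> eta t \<le> eta s"
    and "1 \<le> T" and "T \<le> n"
    and "x1 \<in> X"
    and "neighbouring n S S'"
  shows "(\<Sum>\<pi>\<in>{p. p permutes {1..n}}.
            norm (persgd X g eta T x1 \<pi> S - persgd X g eta T x1 \<pi> S'))
          / real (card {p. p permutes {1..n}})
         \<le> min (2 * R) (sqrt 2 * L * (real (T - 1) / real n) * sqrt (\<Sum>t=1..T-1. (eta t)\<^sup>2))"
proof -
  let ?P = "{p. p permutes {1..n}}"
  let ?D = "\<lambda>\<pi>. norm (persgd X g eta T x1 \<pi> S - persgd X g eta T x1 \<pi> S')"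
  let ?B = "L * (real (T - 1) / real n) * sqrt (\<Sum>t=1..T-1. (eta t)\<^sup>2)"
  have "closed X"
    using \<open>compact X\<close> by (rule compact_imp_closed)
  have "sum ?D ?P / card ?P \<le> 2 * R"
    using assms(3,7,9,11)
    by (intro sum_divide_card_le norm_persgd_diff_le_diameter \<open>convex X\<close> \<open>closed X\<close>
        finite_permutations) (auto intro: exI[of _ id])
  moreover
  txt \<open>Convexity and Lipschitz continuity of f enter only through the subgradients g:
    they are monotone and bounded by L.\<close>
  have "0 \<le> inner (g x z - g y z) (x - y)" if "x \<in> X" "y \<in> X" for x y z
    using that assms(5)[OF that(1)] assms(5)[OF that(2)] by (rule is_subgradient_monotone)
  then have "sum ?D ?P / card ?P \<le> ?B"
    using persgd_mean_norm_diff_le[OF \<open>convex X\<close> \<open>closed X\<close> \<open>x1 \<in> X\<close>] assms(6-10,12)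
    by blast
  moreover have "?B \<le> sqrt 2 * L * (real (T - 1) / real n) * sqrt (\<Sum>t=1..T-1. (eta t)\<^sup>2)"
    using mult_right_mono[of 1 "sqrt 2" ?B] order_trans[OF norm_ge_zero assms(6)[OF \<open>x1 \<in> X\<close>]]
    by (simp add: mult.assoc sum_nonneg)
  ultimately show ?thesis
    by simp
qed

end
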